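(* Let $R$ be a 2-primal ring (for instance a reduced, commutative, left duo, symmetric, reversible, IFP, PSI or semi-symmetric ring) and $M$ a projective left $R$-module. Then $\mathcal N_s(M)=\langle E_M(0)\rangle=\beta_{co}(M)=\beta(M)$. In particular the zero submodule of $M$ satisfies both the complete radical formula and the radical formula.
   Context: Rings are associative with identity; modules are unital left modules. A ring is 2-primal if its set of nilpotent elements equals its prime radical; the listed ring classes are all contained in the class of 2-primal rings. A submodule $P$ of $M$ is prime if $RM\not\subseteq P$ and for every ideal $A$ and submodule $K$ with $AK\subseteq P$, $K\subseteq P$ or $AM\subseteq P$; completely prime if $RM\not\subseteq P$ and $rm\in P$ implies $m\in P$ or $rM\subseteq P$. $\beta(M)$ (resp. $\beta_{co}(M)$) is the intersection of all prime (resp. completely prime) submodules ($=M$ if none). $E_M(0)=\{rm: r^km=0\text{ for some }k\in\mathbb N\}$, $\langle E_M(0)\rangle$ the submodule generated. A submodule $N$ satisfies the radical formula (resp. complete radical formula) if the submodule generated by $E_M(N)=\{rm: r^km\in N\text{ for some }k\}$ equals the intersection of all prime (resp. completely prime) submodules containing $N$. $\mathcal N_s(M)$ is the set of strongly nilpotent elements: $m=\sum_{i=1}^r a_im_i$ such that for each $i$ and every sequence $a_{i1}=a_i$, $a_{i,n+1}\in a_{in}Ra_{in}$, some $a_{ik}Rm_i=0$. *)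

theory Defs
  imports Main
begin

definition ring_ideal :: "'r::ring_1 set \<Rightarrow> bool" where
  "ring_ideal A \<longleftrightarrow> 0 \<in> A \<and> (\<forall>a\<in>A. \<forall>b\<in>A. a + b \<in> A) \<and> (\<forall>a\<in>A. - a \<in> A)
     \<and> (\<forall>a\<in>A. \<forall>r. r * a \<in> A \<and> a * r \<in> A)"

definition prime_ideal :: "'r::ring_1 set \<Rightarrow> bool" where
  "prime_ideal P \<longleftrightarrow> ring_ideal P \<and> P \<noteq> UNIV \<and>
     (\<forall>A B. ring_ideal A \<longrightarrow> ring_ideal B \<longrightarrow> (\<forall>a\<in>A. \<forall>b\<in>B. a * b \<in> P)
        \<longrightarrow> A \<subseteq> P \<or> B \<subseteq> P)"

definition prime_radical :: "'r::ring_1 set" where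
  "prime_radical = \<Inter> {P. prime_ideal P}"

definition nilpotent_elems :: "'r::ring_1 set" where
  "nilpotent_elems = {x. \<exists>n. x ^ n = 0}"

definition two_primal :: "'r::ring_1 itself \<Rightarrow> bool" where
  "two_primal _ \<longleftrightarrow> (nilpotent_elems :: 'r set) = prime_radical"

record ('r, 'm) lmodule =
  carrier :: "'m set"
  add :: "'m \<Rightarrow> 'm \<Rightarrow> 'm"
  zero :: 'm
  smult :: "'r \<Rightarrow> 'm \<Rightarrow> 'm"

definition is_lmodule :: "('r::ring_1, 'm) lmodule \<Rightarrow> bool" where
  "is_lmodule M \<longleftrightarrow>
     zero M \<in> carrier M \<and>
     (\<forall>x\<in>carrier M. \<forall>y\<in>carrier M. add M x y \<in> carrier M) \<and>
     (\<forall>x\<in>carrier M. \<forall>y\<in>carrier M. \<forall>z\<in>carrier M. add M (add M x y) z = add M x (add M y z)) \<and>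
     (\<forall>x\<in>carrier M. \<forall>y\<in>carrier M. add M x y = add M y x) \<and>
     (\<forall>x\<in>carrier M. add M (zero M) x = x) \<and>
     (\<forall>x\<in>carrier M. \<exists>y\<in>carrier M. add M x y = zero M) \<and>
     (\<forall>r. \<forall>x\<in>carrier M. smult M r x \<in> carrier M) \<and>
     (\<forall>r. \<forall>x\<in>carrier M. \<forall>y\<in>carrier M. smult M r (add M x y) = add M (smult M r x) (smult M r y)) \<and>
     (\<forall>r s. \<forall>x\<in>carrier M. smult M (r + s) x = add M (smult M r x) (smult M s x)) \<and>
     (\<forall>r s. \<forall>x\<in>carrier M. smult M (r * s) x = smult M r (smult M s x)) \<and>
     (\<forall>x\<in>carrier M. smult M 1 x = x)"

definition submodule :: "('r::ring_1, 'm) lmodule \<Rightarrow> 'm set \<Rightarrow> bool" where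
  "submodule M N \<longleftrightarrow> N \<subseteq> carrier M \<and> zero M \<in> N \<and>
     (\<forall>x\<in>N. \<forall>y\<in>N. add M x y \<in> N) \<and> (\<forall>r. \<forall>x\<in>N. smult M r x \<in> N)"

definition gen_submodule :: "('r::ring_1, 'm) lmodule \<Rightarrow> 'm set \<Rightarrow> 'm set" where
  "gen_submodule M S = \<Inter> {N. submodule M N \<and> S \<subseteq> N}"

definition module_hom :: "('r::ring_1, 'm) lmodule \<Rightarrow> ('r, 'n) lmodule \<Rightarrow> ('m \<Rightarrow> 'n) \<Rightarrow> bool" where
  "module_hom M N f \<longleftrightarrow> (\<forall>x\<in>carrier M. f x \<in> carrier N) \<and>
     (\<forall>x\<in>carrier M. \<forall>y\<in>carrier M. f (add M x y) = add N (f x) (f y)) \<and>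
     (\<forall>r. \<forall>x\<in>carrier M. f (smult M r x) = smult N r (f x))"

text \<open>Since HOL cannot
quantify over types inside a formula, the test modules N, P are taken with carriers in
the type 'm => 'r, which contains (a copy of) the free module on the elements of M;
this suffices (and is necessary) for projectivity in the usual sense.\<close>
definition projective :: "('r::ring_1, 'm) lmodule \<Rightarrow> bool" where
  "projective M \<longleftrightarrow> is_lmodule M \<and>
     (\<forall>(N :: ('r, 'm \<Rightarrow> 'r) lmodule) (P :: ('r, 'm \<Rightarrow> 'r) lmodule) g f.
        is_lmodule N \<longrightarrow> is_lmodule P \<longrightarrow> module_hom N P g \<longrightarrow> g ` carrier N = carrier P \<longrightarrow>
        module_hom M P f \<longrightarrow>
        (\<exists>h. module_hom M N h \<and> (\<forall>x\<in>carrier M. g (h x) = f x)))"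

definition prime_submodule :: "('r::ring_1, 'm) lmodule \<Rightarrow> 'm set \<Rightarrow> bool" where
  "prime_submodule M P \<longleftrightarrow> submodule M P \<and>
     \<not> (\<forall>r. \<forall>m\<in>carrier M. smult M r m \<in> P) \<and>
     (\<forall>A K. ring_ideal A \<longrightarrow> submodule M K \<longrightarrow> (\<forall>a\<in>A. \<forall>k\<in>K. smult M a k \<in> P) \<longrightarrow>
        K \<subseteq> P \<or> (\<forall>a\<in>A. \<forall>m\<in>carrier M. smult M a m \<in> P))"

definition completely_prime_submodule :: "('r::ring_1, 'm) lmodule \<Rightarrow> 'm set \<Rightarrow> bool" where
  "completely_prime_submodule M P \<longleftrightarrow> submodule M P \<and>
     \<not> (\<forall>r. \<forall>m\<in>carrier M. smult M r m \<in> P) \<and>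
     (\<forall>r. \<forall>m\<in>carrier M. smult M r m \<in> P \<longrightarrow>
        m \<in> P \<or> (\<forall>m'\<in>carrier M. smult M r m' \<in> P))"

definition prime_hull :: "('r::ring_1, 'm) lmodule \<Rightarrow> 'm set \<Rightarrow> 'm set" where
  "prime_hull M N = (if {P. prime_submodule M P \<and> N \<subseteq> P} = {} then carrier M
     else \<Inter> {P. prime_submodule M P \<and> N \<subseteq> P})"

definition co_prime_hull :: "('r::ring_1, 'm) lmodule \<Rightarrow> 'm set \<Rightarrow> 'm set" where
  "co_prime_hull M N = (if {P. completely_prime_submodule M P \<and> N \<subseteq> P} = {} then carrier M
     else \<Inter> {P. completely_prime_submodule M P \<and> N \<subseteq> P})"

definition beta :: "('r::ring_1, 'm) lmodule \<Rightarrow> 'm set" where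
  "beta M = (if {P. prime_submodule M P} = {} then carrier M else \<Inter> {P. prime_submodule M P})"

definition beta_co :: "('r::ring_1, 'm) lmodule \<Rightarrow> 'm set" where
  "beta_co M = (if {P. completely_prime_submodule M P} = {} then carrier M
     else \<Inter> {P. completely_prime_submodule M P})"

definition E_M :: "('r::ring_1, 'm) lmodule \<Rightarrow> 'm set \<Rightarrow> 'm set" where
  "E_M M N = {smult M r m | r m. m \<in> carrier M \<and> (\<exists>k::nat. smult M (r ^ k) m \<in> N)}"

definition radical_formula :: "('r::ring_1, 'm) lmodule \<Rightarrow> 'm set \<Rightarrow> bool" where
  "radical_formula M N \<longleftrightarrow> gen_submodule M (E_M M N) = prime_hull M N"

definition complete_radical_formula :: "('r::ring_1, 'm) lmodule \<Rightarrow> 'm set \<Rightarrow> bool" where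
  "complete_radical_formula M N \<longleftrightarrow> gen_submodule M (E_M M N) = co_prime_hull M N"

definition msum :: "('r, 'm) lmodule \<Rightarrow> 'm list \<Rightarrow> 'm" where
  "msum M xs = foldr (add M) xs (zero M)"

definition strongly_nilpotent_elems :: "('r::ring_1, 'm) lmodule \<Rightarrow> 'm set" where
  "strongly_nilpotent_elems M =
     {x. \<exists>ps :: ('r \<times> 'm) list.
        (\<forall>(a, m) \<in> set ps. m \<in> carrier M) \<and>
        x = msum M (map (\<lambda>(a, m). smult M a m) ps) \<and>
        (\<forall>(a, m) \<in> set ps. \<forall>s :: nat \<Rightarrow> 'r.
           s 0 = a \<longrightarrow> (\<forall>n. \<exists>t. s (Suc n) = s n * t * s n) \<longrightarrow>
           (\<exists>k. \<forall>t. smult M (s k * t) m = zero M))}"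

end

(* The nilpotent elements of a 2-primal ring form an ideal, equal to the prime radical.
   In any module, strongly nilpotent elements lie in every prime submodule, so
   N_s(M) <= beta(M) <= beta_co(M), and <E_M(0)> <= beta_co(M) since completely prime
   submodules are closed under extracting roots r^k m -> r m.

   For the converse, a projective M splits off a free module: there are coordinates h x with
   x = sum_m (h x m) m.  If some coordinate of x is not nilpotent, a completely prime ideal Q
   avoiding it exists (Zorn, among completely semiprime ideals); the elements whose coordinates
   all lie in Q form a completely prime submodule missing x.  Hence elements of beta_co(M) have
   nilpotent coordinates, and such combinations lie in <E_M(0)> and, because an m-sequence
   starting in the prime radical reaches 0, in N_s(M). *)

theory Submission
  imports Defs
begin

lemma ring_ideal_Inter: "(\<And>P. P \<in> F \<Longrightarrow> ring_ideal P) \<Longrightarrow> ring_ideal (\<Inter> F)"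
  unfolding ring_ideal_def by blast

lemma ring_ideal_zero: "ring_ideal A \<Longrightarrow> 0 \<in> A"
  and ring_ideal_add: "ring_ideal A \<Longrightarrow> x \<in> A \<Longrightarrow> y \<in> A \<Longrightarrow> x + y \<in> A"
  and ring_ideal_uminus: "ring_ideal A \<Longrightarrow> x \<in> A \<Longrightarrow> - x \<in> A"
  and ring_ideal_mult_left: "ring_ideal A \<Longrightarrow> x \<in> A \<Longrightarrow> r * x \<in> A"
  and ring_ideal_mult_right: "ring_ideal A \<Longrightarrow> x \<in> A \<Longrightarrow> x * r \<in> A"
  by (simp_all add: ring_ideal_def)

lemma ring_ideal_chain_Union:
  assumes "C \<noteq> {}" "\<forall>A\<in>C. ring_ideal A" "subset.chain UNIV C"
  shows "ring_ideal (\<Union>C)"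
  unfolding ring_ideal_def
proof (intro conjI ballI allI)
  show "0 \<in> \<Union>C" using assms(1,2) ring_ideal_zero by blast
next
  fix x y assume "x \<in> \<Union>C" "y \<in> \<Union>C"
  then obtain A B where "A \<in> C" "B \<in> C" "x \<in> A" "y \<in> B" by blast
  moreover have "A \<subseteq> B \<or> B \<subseteq> A" using assms(3) \<open>A \<in> C\<close> \<open>B \<in> C\<close> by (auto simp: subset_chain_def)
  ultimately obtain D where "D \<in> C" "x \<in> D" "y \<in> D" by blast
  then show "x + y \<in> \<Union>C" using assms(2) ring_ideal_add by blast
next
  fix x r assume "x \<in> \<Union>C"
  then obtain A where A: "A \<in> C" "x \<in> A" by blast
  then have "ring_ideal A" using assms(2) by blast
  then have "- x \<in> A" "r * x \<in> A" "x * r \<in> A" using A(2) by (simp_all add: ring_ideal_def)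
  then show "- x \<in> \<Union>C" "r * x \<in> \<Union>C" "x * r \<in> \<Union>C" using A(1) by blast+
qed

lemma ring_ideal_plus:
  assumes "ring_ideal A" "ring_ideal B"
  shows "ring_ideal {a + b | a b. a \<in> A \<and> b \<in> B}"
  unfolding ring_ideal_def
proof (intro conjI ballI allI)
  show "0 \<in> {a + b | a b. a \<in> A \<and> b \<in> B}"
    using assms ring_ideal_zero by force
next
  fix x y assume "x \<in> {a + b | a b. a \<in> A \<and> b \<in> B}" "y \<in> {a + b | a b. a \<in> A \<and> b \<in> B}"
  then obtain a b a' b' where "x = a + b" "y = a' + b'" "a \<in> A" "b \<in> B" "a' \<in> A" "b' \<in> B" by blast
  moreover have "x + y = (a + a') + (b + b')" using calculation by (simp add: algebra_simps)
  ultimately show "x + y \<in> {a + b | a b. a \<in> A \<and> b \<in> B}" using assms ring_ideal_add by blast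
next
  fix x assume "x \<in> {a + b | a b. a \<in> A \<and> b \<in> B}"
  then obtain a b where x: "x = a + b" "a \<in> A" "b \<in> B" by blast
  then show "- x \<in> {a + b | a b. a \<in> A \<and> b \<in> B}"
    using assms by (intro CollectI exI[of _ "- a"] exI[of _ "- b"]) (simp add: ring_ideal_def)
  fix r
  show "r * x \<in> {a + b | a b. a \<in> A \<and> b \<in> B}"
    using x assms by (intro CollectI exI[of _ "r * a"] exI[of _ "r * b"]) (simp add: ring_ideal_def distrib_left)
  show "x * r \<in> {a + b | a b. a \<in> A \<and> b \<in> B}"
    using x assms by (intro CollectI exI[of _ "a * r"] exI[of _ "b * r"]) (simp add: ring_ideal_def distrib_right)
qed

section \<open>Nilpotent elements and completely prime ideals\<close>

definition completely_semiprime :: "'r::ring_1 set \<Rightarrow> bool" where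
  "completely_semiprime Q \<longleftrightarrow> ring_ideal Q \<and> (\<forall>a. a * a \<in> Q \<longrightarrow> a \<in> Q)"

lemma completely_semiprime_ideal: "completely_semiprime Q \<Longrightarrow> ring_ideal Q"
  and completely_semiprime_square: "completely_semiprime Q \<Longrightarrow> a * a \<in> Q \<Longrightarrow> a \<in> Q"
  unfolding completely_semiprime_def by blast+

lemma two_primal_nilpotent_ideal:
  assumes "two_primal TYPE('r::ring_1)"
  shows "ring_ideal (nilpotent_elems :: 'r set)"
proof -
  have "ring_ideal (prime_radical :: 'r set)"
    unfolding prime_radical_def by (rule ring_ideal_Inter) (simp add: prime_ideal_def)
  then show ?thesis using assms by (simp add: two_primal_def)
qed

lemma nilpotent_elems_square:
  fixes a :: "'r::ring_1"
  assumes "a * a \<in> nilpotent_elems" shows "a \<in> nilpotent_elems"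
proof -
  obtain n where "(a * a) ^ n = 0" using assms by (auto simp: nilpotent_elems_def)
  then have "a ^ (2 * n) = 0" by (simp add: power_mult power2_eq_square)
  then show ?thesis by (auto simp: nilpotent_elems_def)
qed

lemma completely_semiprime_commute:
  assumes "completely_semiprime Q" "a * b \<in> Q"
  shows "b * a \<in> Q"
proof -
  have I: "ring_ideal Q" using assms(1) by (rule completely_semiprime_ideal)
  have "b * (a * b) * a \<in> Q" by (rule ring_ideal_mult_right[OF I ring_ideal_mult_left[OF I assms(2)]])
  then have "(b * a) * (b * a) \<in> Q" by (simp add: mult.assoc)
  then show ?thesis by (rule completely_semiprime_square[OF assms(1)])
qed

lemma completely_semiprime_insert:
  assumes "completely_semiprime Q" "a * b \<in> Q"
  shows "a * r * b \<in> Q"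
proof -
  have I: "ring_ideal Q" using assms(1) by (rule completely_semiprime_ideal)
  have "(a * r) * (b * a) * (r * b) \<in> Q"
    by (rule ring_ideal_mult_right[OF I ring_ideal_mult_left[OF I completely_semiprime_commute[OF assms]]])
  then have "(a * r * b) * (a * r * b) \<in> Q" by (simp add: mult.assoc)
  then show ?thesis by (rule completely_semiprime_square[OF assms(1)])
qed

lemma completely_semiprime_annihilator:
  assumes Q: "completely_semiprime Q"
  shows "completely_semiprime {y. a * y \<in> Q}"
proof -
  have I: "ring_ideal Q" using Q by (rule completely_semiprime_ideal)
  have "ring_ideal {y. a * y \<in> Q}"
    unfolding ring_ideal_def
  proof (intro conjI ballI allI)
    fix x y r assume x: "x \<in> {y. a * y \<in> Q}" and y: "y \<in> {y. a * y \<in> Q}"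
    show "x + y \<in> {y. a * y \<in> Q}" using ring_ideal_add[OF I] x y by (simp add: distrib_left)
  next
    fix x r assume x: "x \<in> {y. a * y \<in> Q}"
    then show "- x \<in> {y. a * y \<in> Q}" using ring_ideal_uminus[OF I] by simp
    show "r * x \<in> {y. a * y \<in> Q}"
      using completely_semiprime_insert[OF Q, of a x r] x by (simp add: mult.assoc)
    show "x * r \<in> {y. a * y \<in> Q}"
      using ring_ideal_mult_right[OF I, of "a * x" r] x by (simp add: mult.assoc)
  qed (simp add: ring_ideal_zero[OF I])
  moreover have "y \<in> {y. a * y \<in> Q}" if "a * (y * y) \<in> Q" for y
  proof -
    have "(a * y) * y \<in> Q" using that by (simp add: mult.assoc)
    then have "(a * y) * a * y \<in> Q" by (rule completely_semiprime_insert[OF Q])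
    then have "(a * y) * (a * y) \<in> Q" by (simp add: mult.assoc)
    then show ?thesis using completely_semiprime_square[OF Q] by blast
  qed
  ultimately show ?thesis unfolding completely_semiprime_def by blast
qed

text \<open>A maximal completely semiprime ideal avoiding c is completely prime: if a b \<in> Q with
  a, b \<notin> Q, maximality forces first a c \<in> Q and then (via c a \<in> Q) c \<in> Q.\<close>

lemma completely_prime_ideal_avoiding:
  fixes c :: "'r::ring_1"
  assumes "ring_ideal (nilpotent_elems :: 'r set)" and c: "c \<notin> nilpotent_elems"
  shows "\<exists>Q. ring_ideal Q \<and> c \<notin> Q \<and> (\<forall>a b. a * b \<in> Q \<longrightarrow> a \<in> Q \<or> b \<in> Q)"
proof -
  define F where "F = {Q::'r set. completely_semiprime Q \<and> c \<notin> Q}"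
  have "nilpotent_elems \<in> F"
    unfolding F_def completely_semiprime_def using assms nilpotent_elems_square by blast
  moreover have "\<Union>C \<in> F" if "C \<noteq> {}" "subset.chain F C" for C
  proof -
    have "C \<subseteq> F" "subset.chain UNIV C" using that(2) by (auto simp: subset_chain_def)
    then show ?thesis
      using ring_ideal_chain_Union[OF that(1)] unfolding F_def completely_semiprime_def by blast
  qed
  ultimately obtain Q where Q: "Q \<in> F" and max: "\<forall>X\<in>F. Q \<subseteq> X \<longrightarrow> X = Q"
    using subset_Zorn_nonempty[of F] by blast
  have sp: "completely_semiprime Q" and cQ: "c \<notin> Q" using Q by (simp_all add: F_def)
  have Q_sub: "Q \<subseteq> {y. x * y \<in> Q}" for x
    using sp ring_ideal_mult_left unfolding completely_semiprime_def by blast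
  have "a \<in> Q \<or> b \<in> Q" if ab: "a * b \<in> Q" for a b
  proof (rule ccontr)
    assume "\<not> (a \<in> Q \<or> b \<in> Q)"
    then have "{y. a * y \<in> Q} \<noteq> Q" using ab by auto
    then have "{y. a * y \<in> Q} \<notin> F" using max Q_sub by blast
    moreover have "completely_semiprime {y. a * y \<in> Q}"
      by (rule completely_semiprime_annihilator[OF sp])
    ultimately have "a * c \<in> Q" by (simp add: F_def)
    then have "c * a \<in> Q" by (rule completely_semiprime_commute[OF sp])
    then have "{y. c * y \<in> Q} \<noteq> Q" using \<open>\<not> (a \<in> Q \<or> b \<in> Q)\<close> by auto
    moreover have "c \<notin> {y. c * y \<in> Q}" using completely_semiprime_square[OF sp] cQ by blast
    then have "{y. c * y \<in> Q} \<in> F"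
      using completely_semiprime_annihilator[OF sp] by (simp add: F_def)
    ultimately show False using max Q_sub by blast
  qed
  then show ?thesis using sp cQ unfolding completely_semiprime_def by blast
qed

section \<open>m-systems and the prime radical\<close>

definition m_system :: "'r::ring_1 set \<Rightarrow> bool" where
  "m_system S \<longleftrightarrow> (\<forall>a\<in>S. \<forall>b\<in>S. \<exists>t. a * t * b \<in> S)"

definition m_sequence :: "(nat \<Rightarrow> 'r::ring_1) \<Rightarrow> bool" where
  "m_sequence s \<longleftrightarrow> (\<forall>n. \<exists>t. s (Suc n) = s n * t * s n)"

lemma m_sequence_factor:
  assumes "m_sequence s"
  shows "\<exists>x. s (i + n) = s i * x" and "\<exists>y. s (i + n) = y * s i"
proof -
  have step: "\<exists>t. s (Suc (i + n)) = s (i + n) * t * s (i + n)" for n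
    using assms by (simp add: m_sequence_def)
  show "\<exists>x. s (i + n) = s i * x"
  proof (induction n)
    case (Suc n)
    then obtain x where "s (i + n) = s i * x" by blast
    with step[of n] show ?case by (metis add_Suc_right mult.assoc)
  qed (metis add_0_right mult_1_right)
  show "\<exists>y. s (i + n) = y * s i"
  proof (induction n)
    case (Suc n)
    then obtain y where "s (i + n) = y * s i" by blast
    with step[of n] show ?case by (metis add_Suc_right mult.assoc)
  qed (metis add_0_right mult_1_left)
qed

lemma m_system_range:
  assumes "m_sequence s"
  shows "m_system (range s)"
  unfolding m_system_def
proof (clarsimp)
  fix i j
  have "\<exists>t l. s l = s i * t * s j"
  proof (cases "i \<le> j")
    case True
    then obtain n where j: "j = i + n" using le_Suc_ex by blast
    obtain x where x: "s j = s i * x" using m_sequence_factor(1)[OF assms, of i n] j by blast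
    obtain t where "s (Suc j) = s j * t * s j" using assms by (auto simp: m_sequence_def)
    then have "s (Suc j) = s i * (x * t) * s j" using x by (simp add: mult.assoc)
    then show ?thesis by blast
  next
    case False
    then obtain n where i: "i = j + n" using le_Suc_ex[of j i] by auto
    obtain y where y: "s i = y * s j" using m_sequence_factor(2)[OF assms, of j n] i by blast
    obtain t where "s (Suc i) = s i * t * s i" using assms by (auto simp: m_sequence_def)
    then have "s (Suc i) = s i * (t * y) * s j" using y by (simp add: mult.assoc)
    then show ?thesis by blast
  qed
  then show "\<exists>t. s i * t * s j \<in> range s" by (metis rangeI)
qed

text \<open>An ideal Q maximal among those disjoint from an m-system S is prime: if A, B \<nsubseteq> Q then
  Q + A and Q + B meet S, in elements q + a and q' + b, and some (q + a) t (q' + b) \<in> S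
  lies in Q as soon as A B \<subseteq> Q.\<close>

lemma prime_ideal_disjoint_m_system:
  fixes S :: "'r::ring_1 set"
  assumes S: "m_system S" "S \<noteq> {}" and "0 \<notin> S"
  shows "\<exists>Q. prime_ideal Q \<and> Q \<inter> S = {}"
proof -
  define F where "F = {Q::'r set. ring_ideal Q \<and> Q \<inter> S = {}}"
  have "{0} \<in> F" using \<open>0 \<notin> S\<close> by (auto simp: F_def ring_ideal_def)
  moreover have "\<Union>C \<in> F" if "C \<noteq> {}" "subset.chain F C" for C
    using that ring_ideal_chain_Union[OF that(1)] by (auto simp: F_def subset_chain_def)
  ultimately obtain Q where "Q \<in> F" and max: "\<forall>X\<in>F. Q \<subseteq> X \<longrightarrow> X = Q"
    using subset_Zorn_nonempty[of F] by blast
  then have Q: "ring_ideal Q" and QS: "Q \<inter> S = {}" by (auto simp: F_def)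
  have meet: "\<exists>q a. q + a \<in> S \<and> q \<in> Q \<and> a \<in> A" if A: "ring_ideal A" "\<not> A \<subseteq> Q" for A
  proof -
    let ?QA = "{q + a | q a. q \<in> Q \<and> a \<in> A}"
    have "Q \<subseteq> ?QA" using ring_ideal_zero[OF A(1)] by force
    moreover have "A \<subseteq> ?QA" using ring_ideal_zero[OF Q] by force
    ultimately have "?QA \<notin> F" using max A(2) by blast
    then show ?thesis using ring_ideal_plus[OF Q A(1)] by (auto simp: F_def)
  qed
  have "prime_ideal Q" unfolding prime_ideal_def
  proof (intro conjI allI impI)
    show "Q \<noteq> UNIV" using QS S(2) by blast
    fix A B assume A: "ring_ideal A" and B: "ring_ideal B" and AB: "\<forall>a\<in>A. \<forall>b\<in>B. a * b \<in> Q"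
    show "A \<subseteq> Q \<or> B \<subseteq> Q"
    proof (rule ccontr)
      assume "\<not> (A \<subseteq> Q \<or> B \<subseteq> Q)"
      then obtain q a q' b where qa: "q + a \<in> S" "q \<in> Q" "a \<in> A" and qb: "q' + b \<in> S" "q' \<in> Q" "b \<in> B"
        using meet A B by meson
      obtain t where t: "(q + a) * t * (q' + b) \<in> S" using S(1) qa qb by (auto simp: m_system_def)
      have "(q + a) * t * (q' + b) = q * (t * (q' + b)) + (a * t) * q' + a * (t * b)"
        by (simp add: algebra_simps)
      also have "\<dots> \<in> Q"
      proof (intro ring_ideal_add[OF Q])
        show "q * (t * (q' + b)) \<in> Q" using ring_ideal_mult_right[OF Q qa(2)] .
        show "a * t * q' \<in> Q" using ring_ideal_mult_left[OF Q qb(2)] .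
        show "a * (t * b) \<in> Q" using AB qa(3) ring_ideal_mult_left[OF B qb(3)] by blast
      qed
      finally show False using t QS by blast
    qed
  qed (fact Q)
  then show ?thesis using QS by blast
qed

lemma m_sequence_prime_radical_vanishes:
  fixes s :: "nat \<Rightarrow> 'r::ring_1"
  assumes "m_sequence s" and "s 0 \<in> prime_radical"
  shows "\<exists>k. s k = 0"
proof (rule ccontr)
  assume "\<nexists>k. s k = 0"
  then have "0 \<notin> range s" by (metis rangeE)
  then obtain Q where "prime_ideal Q" "Q \<inter> range s = {}"
    using prime_ideal_disjoint_m_system[OF m_system_range[OF assms(1)]] by blast
  then show False using assms(2) by (auto simp: prime_radical_def)
qed

locale left_module =
  fixes M :: "('r::ring_1, 'm) lmodule"
  assumes zero_closed [simp]: "zero M \<in> carrier M"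
    and add_closed [simp]: "x \<in> carrier M \<Longrightarrow> y \<in> carrier M \<Longrightarrow> add M x y \<in> carrier M"
    and smult_closed [simp]: "x \<in> carrier M \<Longrightarrow> smult M r x \<in> carrier M"
    and add_assoc: "x \<in> carrier M \<Longrightarrow> y \<in> carrier M \<Longrightarrow> z \<in> carrier M \<Longrightarrow>
      add M (add M x y) z = add M x (add M y z)"
    and add_commute: "x \<in> carrier M \<Longrightarrow> y \<in> carrier M \<Longrightarrow> add M x y = add M y x"
    and add_zero_left [simp]: "x \<in> carrier M \<Longrightarrow> add M (zero M) x = x"
    and add_inverse: "x \<in> carrier M \<Longrightarrow> \<exists>y\<in>carrier M. add M x y = zero M"
    and smult_add_right: "x \<in> carrier M \<Longrightarrow> y \<in> carrier M \<Longrightarrow>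
      smult M r (add M x y) = add M (smult M r x) (smult M r y)"
    and smult_add_left: "x \<in> carrier M \<Longrightarrow> smult M (r + s) x = add M (smult M r x) (smult M s x)"
    and smult_mult: "x \<in> carrier M \<Longrightarrow> smult M (r * s) x = smult M r (smult M s x)"
    and smult_one [simp]: "x \<in> carrier M \<Longrightarrow> smult M 1 x = x"

lemma is_lmodule_left_module: "is_lmodule M \<Longrightarrow> left_module M"
  unfolding is_lmodule_def left_module_def by (elim conjE) meson

context left_module
begin

lemma add_zero_right [simp]: "x \<in> carrier M \<Longrightarrow> add M x (zero M) = x"
  using add_commute[of x "zero M"] by simp

lemma add_left_commute:
  "x \<in> carrier M \<Longrightarrow> y \<in> carrier M \<Longrightarrow> z \<in> carrier M \<Longrightarrow>
    add M x (add M y z) = add M y (add M x z)"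
  by (metis add_assoc add_commute)

lemmas add_ac = add_assoc add_commute add_left_commute

lemma add_left_cancel:
  assumes "x \<in> carrier M" "y \<in> carrier M" "z \<in> carrier M" "add M x y = add M x z"
  shows "y = z"
proof -
  obtain w where w: "w \<in> carrier M" "add M x w = zero M" using add_inverse assms(1) by blast
  have "add M (add M w x) y = add M (add M w x) z" using assms w by (simp add: add_assoc)
  then show ?thesis using w assms by (simp add: add_commute)
qed

lemma add_idem_eq_zero: "x \<in> carrier M \<Longrightarrow> add M x x = x \<Longrightarrow> x = zero M"
  using add_left_cancel[of x x "zero M"] by simp

lemma smult_zero_right [simp]: "smult M r (zero M) = zero M"
  using smult_add_right[of "zero M" "zero M" r] add_idem_eq_zero[of "smult M r (zero M)"] by simp

lemma smult_zero_left [simp]: "x \<in> carrier M \<Longrightarrow> smult M 0 x = zero M"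
  using smult_add_left[of x 0 0] add_idem_eq_zero[of "smult M 0 x"] by simp

lemma msum_Nil [simp]: "msum M [] = zero M"
  and msum_Cons [simp]: "msum M (x # xs) = add M x (msum M xs)"
  by (simp_all add: msum_def)

lemma msum_map_closed [simp]: "\<forall>x\<in>set xs. f x \<in> carrier M \<Longrightarrow> msum M (map f xs) \<in> carrier M"
  by (induction xs) auto

lemma msum_map_add:
  assumes "\<forall>x\<in>set xs. f x \<in> carrier M \<and> g x \<in> carrier M"
  shows "msum M (map (\<lambda>x. add M (f x) (g x)) xs) = add M (msum M (map f xs)) (msum M (map g xs))"
  using assms
proof (induction xs)
  case (Cons a xs)
  let ?F = "msum M (map f xs)" and ?G = "msum M (map g xs)"
  have c: "?F \<in> carrier M" "?G \<in> carrier M" "f a \<in> carrier M" "g a \<in> carrier M"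
    using Cons.prems by auto
  then show ?case using Cons by (simp add: add_ac)
qed simp

lemma msum_map_smult:
  "\<forall>x\<in>set xs. f x \<in> carrier M \<Longrightarrow>
    msum M (map (\<lambda>x. smult M r (f x)) xs) = smult M r (msum M (map f xs))"
  by (induction xs) (auto simp: smult_add_right)

lemma msum_map_filter:
  "\<forall>x\<in>set xs. f x \<in> carrier M \<and> (\<not> P x \<longrightarrow> f x = zero M) \<Longrightarrow>
    msum M (map f xs) = msum M (map f (filter P xs))"
  by (induction xs) auto

lemma msum_map_remove1:
  assumes "x \<in> set ys" "\<forall>y\<in>set ys. f y \<in> carrier M"
  shows "msum M (map f ys) = add M (f x) (msum M (map f (remove1 x ys)))"
  using assms
proof (induction ys)
  case (Cons y ys)
  show ?case
  proof (cases "x = y")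
    case False
    then have "x \<in> set ys" using Cons.prems by simp
    moreover have "msum M (map f (remove1 x ys)) \<in> carrier M"
      using Cons.prems(2) by (intro msum_map_closed) (meson in_mono list.set_intros(2) set_remove1_subset)
    ultimately show ?thesis using False Cons by (simp add: add_ac)
  qed simp
qed simp

lemma msum_map_distinct_set_eq:
  assumes "distinct xs" "distinct ys" "set xs = set ys" "\<forall>y\<in>set xs. f y \<in> carrier M"
  shows "msum M (map f xs) = msum M (map f ys)"
  using assms
proof (induction xs arbitrary: ys)
  case (Cons x xs)
  have "set xs = set (remove1 x ys)" using Cons.prems(1-3) by (auto simp: set_remove1_eq)
  then have "msum M (map f xs) = msum M (map f (remove1 x ys))"
    using Cons.IH[of "remove1 x ys"] Cons.prems by simp
  moreover have "x \<in> set ys" using Cons.prems(3) by auto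
  ultimately show ?case using msum_map_remove1[of x ys f] Cons.prems by simp
qed simp

lemma submodule_subset: "submodule M N \<Longrightarrow> N \<subseteq> carrier M"
  and submodule_zero: "submodule M N \<Longrightarrow> zero M \<in> N"
  and submodule_add: "submodule M N \<Longrightarrow> x \<in> N \<Longrightarrow> y \<in> N \<Longrightarrow> add M x y \<in> N"
  and submodule_smult: "submodule M N \<Longrightarrow> x \<in> N \<Longrightarrow> smult M r x \<in> N"
  by (simp_all add: submodule_def)

lemma submodule_carrier: "submodule M (carrier M)"
  by (simp add: submodule_def)

lemma submodule_msum: "submodule M N \<Longrightarrow> set xs \<subseteq> N \<Longrightarrow> msum M xs \<in> N"
  by (induction xs) (auto simp: submodule_def)

lemma submodule_gen_submodule: "S \<subseteq> carrier M \<Longrightarrow> submodule M (gen_submodule M S)"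
  using submodule_carrier unfolding gen_submodule_def submodule_def by blast

lemma gen_submodule_subset: "S \<subseteq> gen_submodule M S"
  unfolding gen_submodule_def by blast

lemma gen_submodule_least: "submodule M N \<Longrightarrow> S \<subseteq> N \<Longrightarrow> gen_submodule M S \<subseteq> N"
  unfolding gen_submodule_def by blast

end

section \<open>Prime and completely prime submodules\<close>

definition strongly_nilpotent_on :: "('r::ring_1, 'm) lmodule \<Rightarrow> 'r \<Rightarrow> 'm \<Rightarrow> bool" where
  "strongly_nilpotent_on M a m \<longleftrightarrow>
     (\<forall>s. s 0 = a \<longrightarrow> m_sequence s \<longrightarrow> (\<exists>k. \<forall>t. smult M (s k * t) m = zero M))"

lemma strongly_nilpotent_elems_iff:
  "x \<in> strongly_nilpotent_elems M \<longleftrightarrow>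
     (\<exists>ps. (\<forall>(a, m) \<in> set ps. m \<in> carrier M \<and> strongly_nilpotent_on M a m) \<and>
       x = msum M (map (\<lambda>(a, m). smult M a m) ps))"
  unfolding strongly_nilpotent_elems_def strongly_nilpotent_on_def m_sequence_def
  by (simp add: split_beta ball_conj_distrib conj_ac)

lemma prime_hull_zero: "prime_hull M {zero M} = beta M"
proof -
  have eq: "{P. prime_submodule M P \<and> {zero M} \<subseteq> P} = {P. prime_submodule M P}"
    by (auto simp: prime_submodule_def submodule_def)
  show ?thesis unfolding prime_hull_def beta_def eq by (rule refl)
qed

lemma co_prime_hull_zero: "co_prime_hull M {zero M} = beta_co M"
proof -
  have eq: "{P. completely_prime_submodule M P \<and> {zero M} \<subseteq> P} = {P. completely_prime_submodule M P}"
    by (auto simp: completely_prime_submodule_def submodule_def)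
  show ?thesis unfolding co_prime_hull_def beta_co_def eq by (rule refl)
qed

lemma beta_lower: "prime_submodule M P \<Longrightarrow> beta M \<subseteq> P"
  and beta_co_lower: "completely_prime_submodule M P \<Longrightarrow> beta_co M \<subseteq> P"
  unfolding beta_def beta_co_def by auto

lemma beta_greatest:
  "N \<subseteq> carrier M \<Longrightarrow> (\<And>P. prime_submodule M P \<Longrightarrow> N \<subseteq> P) \<Longrightarrow> N \<subseteq> beta M"
  and beta_co_greatest:
  "N \<subseteq> carrier M \<Longrightarrow> (\<And>P. completely_prime_submodule M P \<Longrightarrow> N \<subseteq> P) \<Longrightarrow> N \<subseteq> beta_co M"
  unfolding beta_def beta_co_def by auto

lemma beta_subset_carrier: "beta M \<subseteq> carrier M"
proof (cases "\<exists>P. prime_submodule M P")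
  case True
  then obtain P where P: "prime_submodule M P" by blast
  then have "P \<subseteq> carrier M" by (simp add: prime_submodule_def submodule_def)
  then show ?thesis using beta_lower[OF P] by blast
qed (simp add: beta_def)

lemma beta_co_subset_carrier: "beta_co M \<subseteq> carrier M"
proof (cases "\<exists>P. completely_prime_submodule M P")
  case True
  then obtain P where P: "completely_prime_submodule M P" by blast
  then have "P \<subseteq> carrier M" by (simp add: completely_prime_submodule_def submodule_def)
  then show ?thesis using beta_co_lower[OF P] by blast
qed (simp add: beta_co_def)

context left_module
begin

lemma completely_prime_imp_prime:
  assumes "completely_prime_submodule M P"
  shows "prime_submodule M P"
proof -
  have "K \<subseteq> P \<or> (\<forall>a\<in>A. \<forall>m\<in>carrier M. smult M a m \<in> P)"
    if "submodule M K" "\<forall>a\<in>A. \<forall>k\<in>K. smult M a k \<in> P" for A K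
    using that assms submodule_subset unfolding completely_prime_submodule_def by blast
  then show ?thesis using assms unfolding prime_submodule_def completely_prime_submodule_def by blast
qed

lemma beta_subset_beta_co: "beta M \<subseteq> beta_co M"
  using beta_subset_carrier by (rule beta_co_greatest) (rule beta_lower[OF completely_prime_imp_prime])

lemma E_M_zero_subset_completely_prime:
  assumes "completely_prime_submodule M P"
  shows "E_M M {zero M} \<subseteq> P"
proof
  fix x assume "x \<in> E_M M {zero M}"
  then obtain r m k where x: "x = smult M r m" "m \<in> carrier M" "smult M (r ^ k) m = zero M"
    unfolding E_M_def by blast
  have S: "submodule M P"
    and cp: "\<And>m. m \<in> carrier M \<Longrightarrow> smult M r m \<in> P \<Longrightarrow> m \<in> P \<or> (\<forall>m'\<in>carrier M. smult M r m' \<in> P)"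
    using assms unfolding completely_prime_submodule_def by blast+
  have "smult M r m \<in> P" if "m \<in> carrier M" "smult M (r ^ k) m \<in> P" for k m
    using that
  proof (induction k arbitrary: m)
    case 0
    then show ?case using submodule_smult[OF S] by simp
  next
    case (Suc k)
    then have "smult M r (smult M (r ^ k) m) \<in> P" by (simp add: smult_mult)
    then have "smult M (r ^ k) m \<in> P \<or> (\<forall>m'\<in>carrier M. smult M r m' \<in> P)"
      using cp Suc.prems(1) by simp
    then show ?case using Suc by blast
  qed
  then show "x \<in> P" using x submodule_zero[OF S] by metis
qed

lemma gen_E_M_zero_subset_beta_co: "gen_submodule M (E_M M {zero M}) \<subseteq> beta_co M"
proof (rule beta_co_greatest)
  have "E_M M {zero M} \<subseteq> carrier M" unfolding E_M_def by auto
  then show "gen_submodule M (E_M M {zero M}) \<subseteq> carrier M"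
    using submodule_subset submodule_gen_submodule by blast
  show "gen_submodule M (E_M M {zero M}) \<subseteq> P" if "completely_prime_submodule M P" for P
    using gen_submodule_least E_M_zero_subset_completely_prime[OF that] that
    by (simp add: completely_prime_submodule_def)
qed

text \<open>Contrapositive of: b R b R m \<subseteq> P implies b R m \<subseteq> P.  Primeness is applied to the
  ideal A = {a. a R b R m \<subseteq> P}, which contains b, and the submodule K = {k. A k \<subseteq> P},
  which contains b R m.\<close>

lemma prime_submodule_sandwich:
  assumes P: "prime_submodule M P" and m: "m \<in> carrier M" and bt: "smult M (b * t) m \<notin> P"
  shows "\<exists>u t'. smult M (b * u * b * t') m \<notin> P"
proof (rule ccontr)
  assume "\<nexists>u t'. smult M (b * u * b * t') m \<notin> P"
  then have bub: "smult M (b * u * b * t') m \<in> P" for u t' by blast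
  have S: "submodule M P" using P by (simp add: prime_submodule_def)
  have prime: "\<And>A K. ring_ideal A \<Longrightarrow> submodule M K \<Longrightarrow> \<forall>a\<in>A. \<forall>k\<in>K. smult M a k \<in> P \<Longrightarrow>
      K \<subseteq> P \<or> (\<forall>a\<in>A. \<forall>m\<in>carrier M. smult M a m \<in> P)"
    using P unfolding prime_submodule_def by blast
  define A where "A = {a. \<forall>u t. smult M (a * u * b * t) m \<in> P}"
  define K where "K = {k\<in>carrier M. \<forall>a\<in>A. smult M a k \<in> P}"
  have A_ideal: "ring_ideal A" unfolding ring_ideal_def
  proof (intro conjI ballI allI)
    show "0 \<in> A" unfolding A_def using m submodule_zero[OF S] by simp
  next
    fix x y assume "x \<in> A" "y \<in> A"
    then show "x + y \<in> A" unfolding A_def using m submodule_add[OF S]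
      by (simp add: distrib_right smult_add_left)
  next
    fix x r assume x: "x \<in> A"
    have "smult M r (smult M (x * u * b * t) m) \<in> P" for u t r
      using x submodule_smult[OF S] unfolding A_def by blast
    then have rx: "smult M (r * (x * u * b * t)) m \<in> P" for u t r
      using m by (simp only: smult_mult)
    show "r * x \<in> A" using rx unfolding A_def by (simp add: mult.assoc)
    show "- x \<in> A" using rx[of "- 1"] unfolding A_def by simp
    have "smult M (x * (r * u) * b * t) m \<in> P" for u t using x unfolding A_def by blast
    then show "x * r \<in> A" unfolding A_def by (simp add: mult.assoc)
  qed
  have "submodule M K" unfolding submodule_def
  proof (intro conjI ballI allI)
    show "K \<subseteq> carrier M" unfolding K_def by blast
    show "zero M \<in> K" unfolding K_def using submodule_zero[OF S] by simp
  next
    fix x y assume "x \<in> K" "y \<in> K"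
    then show "add M x y \<in> K" unfolding K_def using submodule_add[OF S] by (simp add: smult_add_right)
  next
    fix r x assume x: "x \<in> K"
    have "a * r \<in> A" if "a \<in> A" for a using ring_ideal_mult_right[OF A_ideal that] .
    then show "smult M r x \<in> K" using x unfolding K_def by (simp add: smult_mult[symmetric])
  qed
  moreover have "\<forall>a\<in>A. \<forall>k\<in>K. smult M a k \<in> P" unfolding K_def by blast
  ultimately have "K \<subseteq> P \<or> (\<forall>a\<in>A. \<forall>m\<in>carrier M. smult M a m \<in> P)"
    by (rule prime[OF A_ideal])
  moreover have "b \<in> A" using bub by (simp add: A_def)
  moreover have "smult M (a * 1 * b * t) m \<in> P" if "a \<in> A" for a using that unfolding A_def by blast
  then have "smult M (b * t) m \<in> K"
    unfolding K_def using m by (simp add: smult_mult[symmetric] mult.assoc)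
  ultimately show False using bt m by (auto simp: smult_mult)
qed

text \<open>If a m \<notin> P, choosing u as in the previous lemma again and again builds an m-sequence
  a, a u a, ... none of whose terms kills m into P.\<close>

lemma strongly_nilpotent_on_smult_in_prime:
  assumes P: "prime_submodule M P" and m: "m \<in> carrier M" and sn: "strongly_nilpotent_on M a m"
  shows "smult M a m \<in> P"
proof (rule ccontr)
  assume am: "smult M a m \<notin> P"
  define next_factor where "next_factor b = (SOME u. \<exists>t'. smult M (b * u * b * t') m \<notin> P)" for b
  define s where "s = rec_nat a (\<lambda>_ b. b * next_factor b * b)"
  have s_Suc: "s (Suc n) = s n * next_factor (s n) * s n" for n by (simp add: s_def)
  have outside: "\<exists>t. smult M (s n * t) m \<notin> P" for n
  proof (induction n)
    case 0
    show ?case using am m by (intro exI[of _ 1]) (simp add: s_def)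
  next
    case (Suc n)
    then have "\<exists>u t'. smult M (s n * u * s n * t') m \<notin> P" using prime_submodule_sandwich[OF P m] by blast
    then have "\<exists>t'. smult M (s n * next_factor (s n) * s n * t') m \<notin> P"
      unfolding next_factor_def by (rule someI_ex)
    then show ?case by (simp add: s_Suc)
  qed
  have "m_sequence s" using s_Suc by (auto simp: m_sequence_def)
  moreover have "s 0 = a" by (simp add: s_def)
  ultimately obtain k where "\<forall>t. smult M (s k * t) m = zero M"
    using sn unfolding strongly_nilpotent_on_def by blast
  then show False
    using outside[of k] submodule_zero P by (auto simp: prime_submodule_def)
qed

lemma strongly_nilpotent_elems_subset_beta: "strongly_nilpotent_elems M \<subseteq> beta M"
proof (rule beta_greatest; intro subsetI)
  fix x P assume "x \<in> strongly_nilpotent_elems M"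
  then obtain ps where ps: "\<forall>(a, m) \<in> set ps. m \<in> carrier M \<and> strongly_nilpotent_on M a m"
    and x: "x = msum M (map (\<lambda>(a, m). smult M a m) ps)"
    unfolding strongly_nilpotent_elems_iff by blast
  have "\<forall>p\<in>set ps. (\<lambda>(a, m). smult M a m) p \<in> carrier M" using ps by auto
  then show "x \<in> carrier M" using x by simp
  assume "prime_submodule M P"
  then have "set (map (\<lambda>(a, m). smult M a m) ps) \<subseteq> P"
    using ps strongly_nilpotent_on_smult_in_prime by auto
  then show "x \<in> P"
    using x submodule_msum \<open>prime_submodule M P\<close> by (simp add: prime_submodule_def)
qed

end

section \<open>Projective modules split off the free module\<close>

definition delta :: "'m \<Rightarrow> 'm \<Rightarrow> 'r::ring_1" where
  "delta x = (\<lambda>m. if m = x then 1 else 0)"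

definition supp :: "('m \<Rightarrow> 'r::ring_1) \<Rightarrow> 'm set" where
  "supp f = {m. f m \<noteq> 0}"

definition free_module :: "('r::ring_1, 'm) lmodule \<Rightarrow> ('r, 'm \<Rightarrow> 'r) lmodule" where
  "free_module M = \<lparr>carrier = {f. supp f \<subseteq> carrier M \<and> finite (supp f)},
     add = \<lambda>f g m. f m + g m, zero = \<lambda>_. 0, smult = \<lambda>r f m. r * f m\<rparr>"

definition delta_copy :: "('r::ring_1, 'm) lmodule \<Rightarrow> ('r, 'm \<Rightarrow> 'r) lmodule" where
  "delta_copy M = \<lparr>carrier = delta ` carrier M,
     add = \<lambda>a b. delta (add M (inv delta a) (inv delta b)), zero = delta (zero M),
     smult = \<lambda>r a. delta (smult M r (inv delta a))\<rparr>"

text \<open>The SOME-chosen enumeration of the support does not matter (msum_map_distinct_set_eq).\<close>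

definition fsum :: "('r::ring_1, 'm) lmodule \<Rightarrow> ('m \<Rightarrow> 'r) \<Rightarrow> 'm" where
  "fsum M f = msum M (map (\<lambda>m. smult M (f m) m) (SOME xs. distinct xs \<and> set xs = supp f))"

lemma free_module_simps [simp]:
  "carrier (free_module M) = {f. supp f \<subseteq> carrier M \<and> finite (supp f)}"
  "add (free_module M) = (\<lambda>f g m. f m + g m)" "zero (free_module M) = (\<lambda>_. 0)"
  "smult (free_module M) = (\<lambda>r f m. r * f m)"
  by (simp_all add: free_module_def)

lemma delta_copy_simps [simp]:
  "carrier (delta_copy M) = delta ` carrier M"
  "add (delta_copy M) = (\<lambda>a b. delta (add M (inv delta a) (inv delta b)))"
  "zero (delta_copy M) = delta (zero M)"
  "smult (delta_copy M) = (\<lambda>r a. delta (smult M r (inv delta a)))"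
  by (simp_all add: delta_copy_def)

lemma inj_delta: "inj (delta :: 'm \<Rightarrow> 'm \<Rightarrow> 'r::ring_1)"
proof (rule injI)
  fix x y :: 'm assume "(delta x :: 'm \<Rightarrow> 'r) = delta y"
  then have "(delta x :: 'm \<Rightarrow> 'r) x = delta y x" by simp
  then show "x = y" unfolding delta_def by (cases "x = y") auto
qed

lemma inv_delta [simp]: "inv (delta :: 'm \<Rightarrow> 'm \<Rightarrow> 'r::ring_1) (delta x) = x"
  by (rule inv_f_f[OF inj_delta])

lemma supp_delta: "supp (delta x :: 'm \<Rightarrow> 'r::ring_1) = {x}"
  by (auto simp: supp_def delta_def)

lemma is_lmodule_free_module:
  fixes M :: "('r::ring_1, 'm) lmodule"
  shows "is_lmodule (free_module M)"
  unfolding is_lmodule_def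
proof (intro conjI ballI allI)
  fix f g assume f: "f \<in> carrier (free_module M)" and g: "g \<in> carrier (free_module M)"
  have "supp (\<lambda>m. f m + g m) \<subseteq> supp f \<union> supp g" by (auto simp: supp_def)
  then show "add (free_module M) f g \<in> carrier (free_module M)"
    using f g finite_subset by auto
next
  fix f r assume f: "f \<in> carrier (free_module M)"
  have "supp (\<lambda>m. r * f m) \<subseteq> supp f" by (auto simp: supp_def)
  then show "smult (free_module M) r f \<in> carrier (free_module M)"
    using f finite_subset by auto
next
  fix f assume f: "f \<in> carrier (free_module M)"
  have "supp (\<lambda>m. - f m) = supp f" by (auto simp: supp_def)
  then show "\<exists>g\<in>carrier (free_module M). add (free_module M) f g = zero (free_module M)"
    using f by (intro bexI[of _ "\<lambda>m. - f m"]) auto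
qed (simp_all add: algebra_simps supp_def)

context left_module
begin

lemma fsum_eq:
  assumes "finite (supp f)" "supp f \<subseteq> set L" "set L \<subseteq> carrier M" "distinct L"
  shows "fsum M f = msum M (map (\<lambda>m. smult M (f m) m) L)"
proof -
  define L0 where "L0 = (SOME xs. distinct xs \<and> set xs = supp f)"
  have "\<exists>xs. distinct xs \<and> set xs = supp f" using finite_distinct_list[OF assms(1)] by blast
  then have L0: "distinct L0 \<and> set L0 = supp f" unfolding L0_def by (rule someI_ex)
  have "msum M (map (\<lambda>m. smult M (f m) m) L) =
      msum M (map (\<lambda>m. smult M (f m) m) (filter (\<lambda>m. f m \<noteq> 0) L))"
    using assms(3) by (intro msum_map_filter) auto
  also have "\<dots> = msum M (map (\<lambda>m. smult M (f m) m) L0)"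
    using assms L0 by (intro msum_map_distinct_set_eq) (auto simp: supp_def)
  finally show ?thesis unfolding fsum_def L0_def by simp
qed

lemma fsum_enumeration:
  assumes "f \<in> carrier (free_module M)"
  obtains L where "distinct L" "set L = supp f" "set L \<subseteq> carrier M"
    "fsum M f = msum M (map (\<lambda>m. smult M (f m) m) L)"
proof -
  have f: "finite (supp f)" "supp f \<subseteq> carrier M" using assms by simp_all
  obtain L where L: "distinct L" "set L = supp f"
    using finite_distinct_list[OF f(1)] by auto
  show ?thesis
  proof (rule that[OF L])
    show "set L \<subseteq> carrier M" using L f by simp
    then show "fsum M f = msum M (map (\<lambda>m. smult M (f m) m) L)"
      using fsum_eq[OF f(1) _ _ L(1)] L by simp
  qed
qed

lemma fsum_closed:
  assumes "f \<in> carrier (free_module M)"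
  shows "fsum M f \<in> carrier M"
proof -
  obtain L where "distinct L" "set L = supp f" and L: "set L \<subseteq> carrier M"
    and eq: "fsum M f = msum M (map (\<lambda>m. smult M (f m) m) L)"
    by (rule fsum_enumeration[OF assms])
  have "\<forall>m\<in>set L. smult M (f m) m \<in> carrier M" using L by auto
  then show ?thesis unfolding eq by (rule msum_map_closed)
qed

lemma fsum_add:
  assumes f: "f \<in> carrier (free_module M)" and g: "g \<in> carrier (free_module M)"
  shows "fsum M (\<lambda>m. f m + g m) = add M (fsum M f) (fsum M g)"
proof -
  obtain L where L: "distinct L" "set L = supp f \<union> supp g"
    using f g finite_distinct_list[of "supp f \<union> supp g"] by auto
  have "supp (\<lambda>m. f m + g m) \<subseteq> supp f \<union> supp g" by (auto simp: supp_def)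
  then have sub: "supp (\<lambda>m. f m + g m) \<subseteq> set L" using L(2) by simp
  then have fin: "finite (supp (\<lambda>m. f m + g m))" using finite_subset by (metis finite_set)
  have Lc: "set L \<subseteq> carrier M" using f g L by auto
  have "fsum M (\<lambda>m. f m + g m) = msum M (map (\<lambda>m. smult M (f m + g m) m) L)"
    using fsum_eq[OF fin sub Lc L(1)] .
  also have "\<dots> = msum M (map (\<lambda>m. add M (smult M (f m) m) (smult M (g m) m)) L)"
    using Lc by (intro arg_cong[where f = "msum M"] map_cong) (auto simp: smult_add_left)
  also have "\<dots> = add M (msum M (map (\<lambda>m. smult M (f m) m) L)) (msum M (map (\<lambda>m. smult M (g m) m) L))"
    using Lc by (intro msum_map_add) auto
  also have "\<dots> = add M (fsum M f) (fsum M g)"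
    using fsum_eq[of f L] fsum_eq[of g L] f g L Lc by auto
  finally show ?thesis .
qed

lemma fsum_smult:
  assumes f: "f \<in> carrier (free_module M)"
  shows "fsum M (\<lambda>m. r * f m) = smult M r (fsum M f)"
proof -
  obtain L where L: "distinct L" "set L = supp f" and Lc: "set L \<subseteq> carrier M"
    and f_eq: "fsum M f = msum M (map (\<lambda>m. smult M (f m) m) L)"
    by (rule fsum_enumeration[OF f])
  have "supp (\<lambda>m. r * f m) \<subseteq> supp f" by (auto simp: supp_def)
  then have sub: "supp (\<lambda>m. r * f m) \<subseteq> set L" using L(2) by simp
  then have fin: "finite (supp (\<lambda>m. r * f m))" using finite_subset by (metis finite_set)
  have "fsum M (\<lambda>m. r * f m) = msum M (map (\<lambda>m. smult M (r * f m) m) L)"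
    using fsum_eq[OF fin sub Lc L(1)] .
  also have "\<dots> = msum M (map (\<lambda>m. smult M r (smult M (f m) m)) L)"
    using Lc by (intro arg_cong[where f = "msum M"] map_cong) (auto simp: smult_mult)
  also have "\<dots> = smult M r (msum M (map (\<lambda>m. smult M (f m) m) L))"
    using Lc by (intro msum_map_smult) auto
  finally show ?thesis using f_eq by simp
qed

lemma fsum_delta:
  assumes "x \<in> carrier M"
  shows "fsum M (delta x) = x"
proof -
  have "fsum M (delta x) = msum M (map (\<lambda>m. smult M (delta x m) m) [x])"
    using assms by (intro fsum_eq) (simp_all add: supp_delta)
  then show ?thesis using assms by (simp add: delta_def)
qed

lemma is_lmodule_delta_copy: "is_lmodule (delta_copy M)"
  unfolding is_lmodule_def delta_copy_simps Ball_image_comp comp_def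
proof (intro conjI ballI allI)
  fix x assume "x \<in> carrier M"
  then obtain y where "y \<in> carrier M" "add M x y = zero M" using add_inverse by blast
  then show "\<exists>b\<in>delta ` carrier M. delta (add M (inv delta (delta x)) (inv delta b)) = delta (zero M)"
    by (intro bexI[of _ "delta y"]) auto
qed (simp_all add: add_ac smult_add_right smult_add_left smult_mult)

lemma module_hom_delta: "module_hom M (delta_copy M) delta"
  unfolding module_hom_def by simp

lemma module_hom_fsum: "module_hom (free_module M) (delta_copy M) (\<lambda>f. delta (fsum M f))"
  unfolding module_hom_def
proof (intro conjI ballI allI)
  fix f g r assume f: "f \<in> carrier (free_module M)" and g: "g \<in> carrier (free_module M)"
  show "delta (fsum M f) \<in> carrier (delta_copy M)" using fsum_closed[OF f] by simp
  show "delta (fsum M (add (free_module M) f g)) = add (delta_copy M) (delta (fsum M f)) (delta (fsum M g))"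
    using fsum_add[OF f g] by simp
  show "delta (fsum M (smult (free_module M) r f)) = smult (delta_copy M) r (delta (fsum M f))"
    using fsum_smult[OF f] by simp
qed

lemma fsum_onto_delta_copy: "(\<lambda>f. delta (fsum M f)) ` carrier (free_module M) = carrier (delta_copy M)"
proof
  show "(\<lambda>f. delta (fsum M f)) ` carrier (free_module M) \<subseteq> carrier (delta_copy M)"
    using module_hom_fsum unfolding module_hom_def by blast
  show "carrier (delta_copy M) \<subseteq> (\<lambda>f. delta (fsum M f)) ` carrier (free_module M)"
  proof
    fix a assume "a \<in> carrier (delta_copy M)"
    then obtain x where x: "x \<in> carrier M" "a = delta x" by auto
    show "a \<in> (\<lambda>f. delta (fsum M f)) ` carrier (free_module M)"
      using x fsum_delta[OF x(1)] by (intro image_eqI[of _ _ "delta x"]) (simp_all add: supp_delta)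
  qed
qed

end

text \<open>The test modules in projective live in 'm \<Rightarrow> 'r, so the splitting is obtained by
  lifting delta along the surjection delta \<circ> fsum from the free module onto the copy
  delta ` carrier M of M.\<close>

lemma projective_split:
  fixes M :: "('r::ring_1, 'm) lmodule"
  assumes "projective M"
  obtains h where "module_hom M (free_module M) h" "\<And>x. x \<in> carrier M \<Longrightarrow> fsum M (h x) = x"
proof -
  interpret left_module M using assms by (simp add: projective_def is_lmodule_left_module)
  note lift = assms[unfolded projective_def, THEN conjunct2, rule_format]
  obtain h where "module_hom M (free_module M) h"
    "\<forall>x\<in>carrier M. delta (fsum M (h x)) = (delta x :: 'm \<Rightarrow> 'r)"
    using lift[OF is_lmodule_free_module is_lmodule_delta_copy module_hom_fsum fsum_onto_delta_copy
        module_hom_delta] by blast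
  then show ?thesis using that inj_delta by (metis injD)
qed

context left_module
begin

lemma nilpotent_combination_in_gen_E_M:
  assumes "set L \<subseteq> carrier M" "\<forall>m\<in>set L. c m \<in> nilpotent_elems"
  shows "msum M (map (\<lambda>m. smult M (c m) m) L) \<in> gen_submodule M (E_M M {zero M})"
proof -
  have "E_M M {zero M} \<subseteq> carrier M" unfolding E_M_def by auto
  then have sub: "submodule M (gen_submodule M (E_M M {zero M}))" by (rule submodule_gen_submodule)
  have "smult M (c m) m \<in> E_M M {zero M}" if m: "m \<in> set L" for m
  proof -
    obtain k where "c m ^ k = 0" using assms(2) m by (auto simp: nilpotent_elems_def)
    moreover have "m \<in> carrier M" using assms(1) m by blast
    ultimately show ?thesis unfolding E_M_def
      by (intro CollectI exI[of _ "c m"] exI[of _ m] conjI exI[of _ k]) simp_all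
  qed
  then have "set (map (\<lambda>m. smult M (c m) m) L) \<subseteq> gen_submodule M (E_M M {zero M})"
    using gen_submodule_subset by auto
  then show ?thesis by (rule submodule_msum[OF sub])
qed

lemma nilpotent_strongly_nilpotent_on:
  assumes "two_primal TYPE('r)" "a \<in> nilpotent_elems" "m \<in> carrier M"
  shows "strongly_nilpotent_on M a m"
  unfolding strongly_nilpotent_on_def
proof (intro allI impI)
  fix s :: "nat \<Rightarrow> 'r" assume "s 0 = a" "m_sequence s"
  then obtain k where "s k = 0"
    using assms(1,2) m_sequence_prime_radical_vanishes by (auto simp: two_primal_def)
  then show "\<exists>k. \<forall>t. smult M (s k * t) m = zero M" using assms(3) by (intro exI[of _ k]) simp
qed

lemma nilpotent_combination_strongly_nilpotent:
  assumes "two_primal TYPE('r)" "set L \<subseteq> carrier M" "\<forall>m\<in>set L. c m \<in> nilpotent_elems"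
  shows "msum M (map (\<lambda>m. smult M (c m) m) L) \<in> strongly_nilpotent_elems M"
proof -
  let ?ps = "map (\<lambda>m. (c m, m)) L"
  have "\<forall>(a, m) \<in> set ?ps. m \<in> carrier M \<and> strongly_nilpotent_on M a m"
    using assms nilpotent_strongly_nilpotent_on by auto
  moreover have "msum M (map (\<lambda>m. smult M (c m) m) L) = msum M (map (\<lambda>(a, m). smult M a m) ?ps)"
    by (simp add: comp_def)
  ultimately show ?thesis unfolding strongly_nilpotent_elems_iff by blast
qed

end

locale coordinates = left_module M for M :: "('r::ring_1, 'm) lmodule" +
  fixes h :: "'m \<Rightarrow> 'm \<Rightarrow> 'r"
  assumes module_hom_coord: "module_hom M (free_module M) h"
    and fsum_coord: "x \<in> carrier M \<Longrightarrow> fsum M (h x) = x"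
begin

lemma coord_closed: "x \<in> carrier M \<Longrightarrow> h x \<in> carrier (free_module M)"
  and coord_add: "x \<in> carrier M \<Longrightarrow> y \<in> carrier M \<Longrightarrow> h (add M x y) m = h x m + h y m"
  and coord_smult: "x \<in> carrier M \<Longrightarrow> h (smult M r x) m = r * h x m"
  using module_hom_coord unfolding module_hom_def by simp_all

lemma coord_zero: "h (zero M) m = 0"
  using coord_add[of "zero M" "zero M" m] by simp

lemma coordinate_expansion:
  assumes "x \<in> carrier M"
  obtains L where "set L \<subseteq> carrier M" "x = msum M (map (\<lambda>m. smult M (h x m) m) L)"
  using fsum_enumeration[OF coord_closed[OF assms]] fsum_coord[OF assms] by metis

lemma completely_prime_coord_preimage:
  assumes Q: "ring_ideal Q" "\<forall>a b. a * b \<in> Q \<longrightarrow> a \<in> Q \<or> b \<in> Q"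
    and x: "x \<in> carrier M" "h x m0 \<notin> Q"
  shows "completely_prime_submodule M {y \<in> carrier M. \<forall>m. h y m \<in> Q}"
    (is "completely_prime_submodule M ?P")
  unfolding completely_prime_submodule_def
proof (intro conjI allI ballI impI)
  show "submodule M ?P" unfolding submodule_def
    using coord_zero coord_add coord_smult ring_ideal_zero[OF Q(1)] ring_ideal_add[OF Q(1)]
      ring_ideal_mult_left[OF Q(1)]
    by auto
  show "\<not> (\<forall>r. \<forall>m\<in>carrier M. smult M r m \<in> ?P)" using x by (metis (lifting) mem_Collect_eq smult_one)
next
  fix r y assume y: "y \<in> carrier M" and "smult M r y \<in> ?P"
  then have ry: "r * h y m \<in> Q" for m using coord_smult by simp
  show "y \<in> ?P \<or> (\<forall>m'\<in>carrier M. smult M r m' \<in> ?P)"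
  proof (cases "r \<in> Q")
    case True
    then show ?thesis using coord_smult ring_ideal_mult_right[OF Q(1) True] by auto
  next
    case False
    then show ?thesis using ry Q(2) y by blast
  qed
qed

lemma beta_co_nilpotent_coord:
  assumes "ring_ideal (nilpotent_elems :: 'r set)" and x: "x \<in> beta_co M"
  shows "h x m \<in> nilpotent_elems"
proof (rule ccontr)
  assume "h x m \<notin> nilpotent_elems"
  then obtain Q where Q: "ring_ideal Q" "h x m \<notin> Q" "\<forall>a b. a * b \<in> Q \<longrightarrow> a \<in> Q \<or> b \<in> Q"
    using completely_prime_ideal_avoiding[OF assms(1)] by blast
  have "x \<in> carrier M" using beta_co_subset_carrier x ..
  then have "completely_prime_submodule M {y \<in> carrier M. \<forall>m. h y m \<in> Q}"
    using completely_prime_coord_preimage Q by blast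
  then have "x \<in> {y \<in> carrier M. \<forall>m. h y m \<in> Q}" using x beta_co_lower by blast
  then show False using Q(2) by blast
qed

lemma beta_co_subset_nilpotent_span:
  assumes "two_primal TYPE('r)"
  shows "beta_co M \<subseteq> strongly_nilpotent_elems M \<inter> gen_submodule M (E_M M {zero M})"
proof
  fix x assume x: "x \<in> beta_co M"
  then have "x \<in> carrier M" using beta_co_subset_carrier ..
  then obtain L where L: "set L \<subseteq> carrier M" and x_eq: "x = msum M (map (\<lambda>m. smult M (h x m) m) L)"
    by (rule coordinate_expansion)
  have nil: "\<forall>m\<in>set L. h x m \<in> nilpotent_elems"
    using beta_co_nilpotent_coord[OF two_primal_nilpotent_ideal[OF assms] x] by blast
  show "x \<in> strongly_nilpotent_elems M \<inter> gen_submodule M (E_M M {zero M})"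
    using nilpotent_combination_strongly_nilpotent[OF assms L nil]
      nilpotent_combination_in_gen_E_M[OF L nil]
    by (simp flip: x_eq)
qed

end

theorem corollary4p11:
  fixes M :: "('r::ring_1, 'm) lmodule"
  assumes "two_primal TYPE('r)"
    and "projective M"
  shows "strongly_nilpotent_elems M = gen_submodule M (E_M M {zero M})
       \<and> gen_submodule M (E_M M {zero M}) = beta_co M
       \<and> beta_co M = beta M
       \<and> complete_radical_formula M {zero M}
       \<and> radical_formula M {zero M}"
proof -
  interpret left_module M using assms(2) by (simp add: projective_def is_lmodule_left_module)
  obtain h where "module_hom M (free_module M) h" "\<And>x. x \<in> carrier M \<Longrightarrow> fsum M (h x) = x"
    using projective_split[OF assms(2)] by blast
  then interpret coordinates M h by unfold_locales
  have "beta_co M \<subseteq> strongly_nilpotent_elems M \<inter> gen_submodule M (E_M M {zero M})"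
    using assms(1) by (rule beta_co_subset_nilpotent_span)
  then show ?thesis
    using strongly_nilpotent_elems_subset_beta beta_subset_beta_co gen_E_M_zero_subset_beta_co
    unfolding complete_radical_formula_def radical_formula_def prime_hull_zero co_prime_hull_zero
    by blast
qed

end
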